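(* Let $a,b\in\mathbb D$ with $a\neq b$. For $\varepsilon\in\mathbb C\setminus\{0\}$ let $L^\varepsilon_{aVbV}$ denote Coman's Lempert function on $\mathbb D^2$ with the four poles $(a,0),(b,0),(b,\varepsilon),(a,\varepsilon)$, all of weight $1$. Then for every $z\in\mathbb D^2$, $$\limsup_{\varepsilon\to0}L^\varepsilon_{aVbV}(z)\le\min\{L_{a0b0}(z),L_{aVb0}(z),L_{a0bV}(z),L_{aVbV}(z)\}.$$
   Context: $\mathbb D$ is the open unit disc; maps $\varphi=(\varphi_1,\varphi_2)$ are holomorphic $\mathbb D\to\mathbb D^2$, $\zeta_1,\zeta_2\in\mathbb D$. Coman's Lempert function with poles $p_1,\dots,p_k$ of weight 1: $\inf\{\sum_j\log|\zeta_j|:\varphi(0)=z,\varphi(\zeta_j)=p_j\}$. All of the following are infima over $\varphi$ with $\varphi(0)=z$, $\varphi(\zeta_1)=(a,0)$, $\varphi(\zeta_2)=(b,0)$: $L_{a0b0}(z)=\inf(\log|\zeta_1|+\log|\zeta_2|)$; $L_{a0bV}(z)=\inf(\log|\zeta_1|+2\log|\zeta_2|)$ with additionally $\varphi_1'(\zeta_2)=0$; $L_{aVb0}(z)=\inf(2\log|\zeta_1|+\log|\zeta_2|)$ with additionally $\varphi_1'(\zeta_1)=0$; $L_{aVbV}(z)=\inf(2\log|\zeta_1|+2\log|\zeta_2|)$ with additionally $\varphi_1'(\zeta_1)=\varphi_1'(\zeta_2)=0$. *)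

theory Defs
  imports "HOL-Complex_Analysis.Complex_Analysis"
begin

abbreviation unit_disc :: "complex set" where
  "unit_disc \<equiv> ball 0 1"

definition disc_map :: "(complex \<Rightarrow> complex) \<Rightarrow> (complex \<Rightarrow> complex) \<Rightarrow> bool" where
  "disc_map \<phi>1 \<phi>2 \<longleftrightarrow> \<phi>1 holomorphic_on unit_disc \<and> \<phi>2 holomorphic_on unit_disc
     \<and> \<phi>1 ` unit_disc \<subseteq> unit_disc \<and> \<phi>2 ` unit_disc \<subseteq> unit_disc"

definition elog :: "real \<Rightarrow> ereal" where
  "elog r = (if r = 0 then -\<infinity> else ereal (ln r))"

text \<open>Coman's Lempert function on \<open>D^2\<close> with poles \<open>P!0, ..., P!(k-1)\<close>, all of weight 1
  (infimum over the empty set is \<open>+\<infinity>\<close>).\<close>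
definition coman_lempert :: "(complex \<times> complex) list \<Rightarrow> complex \<times> complex \<Rightarrow> ereal" where
  "coman_lempert P z = Inf {(\<Sum>j<length P. elog (cmod (\<zeta> j))) | \<phi>1 \<phi>2 \<zeta>.
      disc_map \<phi>1 \<phi>2 \<and> (\<phi>1 0, \<phi>2 0) = z \<and>
      (\<forall>j<length P. \<zeta> j \<in> unit_disc \<and> (\<phi>1 (\<zeta> j), \<phi>2 (\<zeta> j)) = P ! j)}"

definition L_a0b0 :: "complex \<Rightarrow> complex \<Rightarrow> complex \<times> complex \<Rightarrow> ereal" where
  "L_a0b0 a b z = Inf {elog (cmod \<zeta>1) + elog (cmod \<zeta>2) | \<phi>1 \<phi>2 \<zeta>1 \<zeta>2.
      disc_map \<phi>1 \<phi>2 \<and> (\<phi>1 0, \<phi>2 0) = z \<and> \<zeta>1 \<in> unit_disc \<and> \<zeta>2 \<in> unit_disc \<and>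
      (\<phi>1 \<zeta>1, \<phi>2 \<zeta>1) = (a, 0) \<and> (\<phi>1 \<zeta>2, \<phi>2 \<zeta>2) = (b, 0)}"

definition L_a0bV :: "complex \<Rightarrow> complex \<Rightarrow> complex \<times> complex \<Rightarrow> ereal" where
  "L_a0bV a b z = Inf {elog (cmod \<zeta>1) + 2 * elog (cmod \<zeta>2) | \<phi>1 \<phi>2 \<zeta>1 \<zeta>2.
      disc_map \<phi>1 \<phi>2 \<and> (\<phi>1 0, \<phi>2 0) = z \<and> \<zeta>1 \<in> unit_disc \<and> \<zeta>2 \<in> unit_disc \<and>
      (\<phi>1 \<zeta>1, \<phi>2 \<zeta>1) = (a, 0) \<and> (\<phi>1 \<zeta>2, \<phi>2 \<zeta>2) = (b, 0) \<and>
      deriv \<phi>1 \<zeta>2 = 0}"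

definition L_aVb0 :: "complex \<Rightarrow> complex \<Rightarrow> complex \<times> complex \<Rightarrow> ereal" where
  "L_aVb0 a b z = Inf {2 * elog (cmod \<zeta>1) + elog (cmod \<zeta>2) | \<phi>1 \<phi>2 \<zeta>1 \<zeta>2.
      disc_map \<phi>1 \<phi>2 \<and> (\<phi>1 0, \<phi>2 0) = z \<and> \<zeta>1 \<in> unit_disc \<and> \<zeta>2 \<in> unit_disc \<and>
      (\<phi>1 \<zeta>1, \<phi>2 \<zeta>1) = (a, 0) \<and> (\<phi>1 \<zeta>2, \<phi>2 \<zeta>2) = (b, 0) \<and>
      deriv \<phi>1 \<zeta>1 = 0}"

definition L_aVbV :: "complex \<Rightarrow> complex \<Rightarrow> complex \<times> complex \<Rightarrow> ereal" where
  "L_aVbV a b z = Inf {2 * elog (cmod \<zeta>1) + 2 * elog (cmod \<zeta>2) | \<phi>1 \<phi>2 \<zeta>1 \<zeta>2.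
      disc_map \<phi>1 \<phi>2 \<and> (\<phi>1 0, \<phi>2 0) = z \<and> \<zeta>1 \<in> unit_disc \<and> \<zeta>2 \<in> unit_disc \<and>
      (\<phi>1 \<zeta>1, \<phi>2 \<zeta>1) = (a, 0) \<and> (\<phi>1 \<zeta>2, \<phi>2 \<zeta>2) = (b, 0) \<and>
      deriv \<phi>1 \<zeta>1 = 0 \<and> deriv \<phi>1 \<zeta>2 = 0}"

end

theory Submission
  imports Defs
begin

(*
  Take a competitor \<phi> for one of the four functions L and put F = \<phi> \<circ> (r G), where 0 < r < 1 and
  G is a holomorphic self-map of the disc fixing 0 (the identity or a Blaschke product of degree 2);
  F maps the disc into a compact part of D\<^sup>2. A simple pole \<zeta> of \<phi> becomes two preimages of \<zeta>/r
  under G, with product of moduli |\<zeta>|/r; a double pole (a zero of \<phi>1') becomes a critical point of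
  F1, next to which F takes the value (a, \<epsilon>) up to an error small compared with the distance. In
  both cases the four values (a,0), (b,0), (b,\<epsilon>), (a,\<epsilon>) are then attained exactly after adding a
  Lagrange interpolation polynomial that tends to 0 with \<epsilon>, and the compactness margin keeps the
  corrected map inside D\<^sup>2. Letting \<epsilon> \<rightarrow> 0 and then r \<rightarrow> 1 gives the bound.
*)

lemma elog_mult: "0 \<le> x \<Longrightarrow> 0 \<le> y \<Longrightarrow> elog (x * y) = elog x + elog y"
  by (auto simp: elog_def ln_mult)

lemma elog_power2: "0 \<le> x \<Longrightarrow> elog (x ^ 2) = 2 * elog x"
  by (auto simp: elog_def ln_mult power2_eq_square)

lemma elog_less_ereal_iff:
  assumes "0 \<le> x" shows "elog x < ereal M \<longleftrightarrow> x < exp M"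
proof (cases "x = 0")
  case False
  with assms have "0 < x" by simp
  then have "ln x < M \<longleftrightarrow> x < exp M" by (metis exp_less_cancel_iff exp_ln)
  with False show ?thesis by (simp add: elog_def)
qed (simp add: elog_def)

lemma tendsto_elog:
  assumes lim: "(f \<longlongrightarrow> P) F" and "0 \<le> P" and nonneg: "\<forall>\<^sub>F x in F. 0 \<le> f x"
  shows "((\<lambda>x. elog (f x)) \<longlongrightarrow> elog P) F"
proof (cases "P = 0")
  case True
  have "\<forall>\<^sub>F x in F. elog (f x) < ereal M" for M
    using order_tendstoD(2)[OF lim, of "exp M"] nonneg True
    by (auto elim: eventually_elim2 simp: elog_less_ereal_iff)
  then show ?thesis using True by (simp add: tendsto_MInfty elog_def)
next
  case False
  with \<open>0 \<le> P\<close> have "0 < P" by simp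
  then have "((\<lambda>x. ereal (ln (f x))) \<longlongrightarrow> elog P) F"
    by (auto simp: elog_def intro!: tendsto_intros lim)
  then show ?thesis
    by (rule Lim_transform_eventually)
      (use order_tendstoD(1)[OF lim \<open>0 < P\<close>] in \<open>auto elim: eventually_mono simp: elog_def\<close>)
qed

lemma le_elog_of_eventually_at_left_1:
  fixes X :: ereal
  assumes "0 \<le> P" and "\<forall>\<^sub>F r in at_left 1. X \<le> elog (P / r ^ n)"
  shows "X \<le> elog P"
proof (rule tendsto_lowerbound[OF _ assms(2)])
  have "((\<lambda>r::real. P / r ^ n) \<longlongrightarrow> P / 1 ^ n) (at_left 1)"
    by (intro tendsto_intros) auto
  moreover have "\<forall>\<^sub>F r in at_left (1::real). 0 \<le> P / r ^ n"
    using eventually_at_left_real[of 0 "1::real"] assms(1) by (auto elim: eventually_mono)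
  ultimately show "((\<lambda>r. elog (P / r ^ n)) \<longlongrightarrow> elog P) (at_left 1)"
    using tendsto_elog assms(1) by fastforce
qed simp

lemma eventually_radius_at_left_1:
  fixes c :: real
  assumes "c < 1"
  shows "\<forall>\<^sub>F r in at_left 1. 0 < r \<and> r < 1 \<and> c < r ^ n"
proof -
  have "((\<lambda>r::real. r ^ n) \<longlongrightarrow> 1 ^ n) (at_left 1)" by (intro tendsto_intros)
  then have "\<forall>\<^sub>F r in at_left (1::real). c < r ^ n" using order_tendstoD(1) assms by simp
  moreover have "\<forall>\<^sub>F r in at_left (1::real). r \<in> {0<..<1}"
    by (rule eventually_at_left_real) simp
  ultimately show ?thesis by eventually_elim auto
qed

lemma coman_lempert_four_poles_le:
  assumes "disc_map \<phi>1 \<phi>2" "(\<phi>1 0, \<phi>2 0) = z"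
    and "x1 \<in> unit_disc" "x2 \<in> unit_disc" "x3 \<in> unit_disc" "x4 \<in> unit_disc"
    and "(\<phi>1 x1, \<phi>2 x1) = p1" "(\<phi>1 x2, \<phi>2 x2) = p2" "(\<phi>1 x3, \<phi>2 x3) = p3" "(\<phi>1 x4, \<phi>2 x4) = p4"
  shows "coman_lempert [p1, p2, p3, p4] z
    \<le> elog (cmod x1) + elog (cmod x2) + elog (cmod x3) + elog (cmod x4)"
proof -
  let ?\<zeta> = "(!) [x1, x2, x3, x4]"
  have "\<forall>j<length [p1, p2, p3, p4]. ?\<zeta> j \<in> unit_disc \<and> (\<phi>1 (?\<zeta> j), \<phi>2 (?\<zeta> j)) = [p1, p2, p3, p4] ! j"
    using assms by (simp add: All_less_Suc2 numeral_eq_Suc)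
  then have "coman_lempert [p1, p2, p3, p4] z \<le> (\<Sum>j<length [p1, p2, p3, p4]. elog (cmod (?\<zeta> j)))"
    unfolding coman_lempert_def using assms(1,2) by (intro Inf_lower CollectI exI conjI) (rule refl)
  also have "\<dots> = elog (cmod x1) + elog (cmod x2) + elog (cmod x3) + elog (cmod x4)"
    by (simp add: eval_nat_numeral)
  finally show ?thesis .
qed

definition node_poly :: "complex \<Rightarrow> complex \<Rightarrow> complex \<Rightarrow> complex \<Rightarrow> complex" where
  "node_poly x1 x2 x3 l = l * (l - x1) * (l - x2) * (l - x3)"

lemma norm_node_poly_le:
  assumes "cmod l \<le> 1" "cmod x1 \<le> 1" "cmod x2 \<le> 1" "cmod x3 \<le> 1"
  shows "cmod (node_poly x1 x2 x3 l) \<le> 8"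
proof -
  have diff: "cmod (l - x) \<le> 2" if "cmod x \<le> 1" for x
    using norm_triangle_ineq4[of l x] that assms(1) by linarith
  have "cmod l * cmod (l - x1) * cmod (l - x2) * cmod (l - x3) \<le> 1 * 2 * 2 * 2"
    by (intro mult_mono diff assms) auto
  then show ?thesis by (simp add: node_poly_def norm_mult)
qed

lemma interpolating_disc_map:
  fixes F :: "complex \<Rightarrow> complex"
  assumes holo: "F holomorphic_on unit_disc" and bound: "\<forall>l\<in>unit_disc. cmod (F l) \<le> K"
    and in_disc: "x1 \<in> unit_disc" "x2 \<in> unit_disc" "x3 \<in> unit_disc" "x4 \<in> unit_disc"
    and nodes: "node_poly x1 x2 x4 x3 \<noteq> 0" "node_poly x2 x1 x3 x4 \<noteq> 0"
    and small: "8 * (cmod (v3 - F x3) / cmod (node_poly x1 x2 x4 x3)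
                   + cmod (v4 - F x4) / cmod (node_poly x2 x1 x3 x4)) < 1 - K"
  obtains G where "G holomorphic_on unit_disc" "G ` unit_disc \<subseteq> unit_disc"
    "G 0 = F 0" "G x1 = F x1" "G x2 = F x2" "G x3 = v3" "G x4 = v4"
proof
  define c3 where "c3 = (v3 - F x3) / node_poly x1 x2 x4 x3"
  define c4 where "c4 = (v4 - F x4) / node_poly x2 x1 x3 x4"
  define G where "G = (\<lambda>l. F l + c3 * node_poly x1 x2 x4 l + c4 * node_poly x2 x1 x3 l)"
  show "G holomorphic_on unit_disc"
    unfolding G_def node_poly_def by (intro holomorphic_intros holo)
  show "G ` unit_disc \<subseteq> unit_disc"
  proof clarify
    fix l :: complex assume l: "l \<in> unit_disc"
    have le1: "cmod l \<le> 1" "cmod x1 \<le> 1" "cmod x2 \<le> 1" "cmod x3 \<le> 1" "cmod x4 \<le> 1"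
      using l in_disc by auto
    have "cmod (G l) \<le> cmod (F l) + cmod c3 * cmod (node_poly x1 x2 x4 l)
                                  + cmod c4 * cmod (node_poly x2 x1 x3 l)"
      unfolding G_def norm_mult[symmetric] by (intro norm_triangle_le add_mono norm_triangle_ineq) simp
    also have "\<dots> \<le> K + cmod c3 * 8 + cmod c4 * 8"
      using bound l by (intro add_mono mult_left_mono norm_node_poly_le le1) auto
    also have "\<dots> < 1"
      using small unfolding c3_def c4_def norm_divide by argo
    finally show "G l \<in> unit_disc" by simp
  qed
  show "G 0 = F 0" "G x1 = F x1" "G x2 = F x2"
    by (simp_all add: G_def node_poly_def)
  show "G x3 = v3" "G x4 = v4"
    using nodes by (simp_all add: G_def c3_def c4_def node_poly_def)
qed

lemma coman_lempert_le_by_interpolation: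
  assumes holo: "F1 holomorphic_on unit_disc" "F2 holomorphic_on unit_disc"
    and bound: "\<forall>l\<in>unit_disc. cmod (F1 l) \<le> K \<and> cmod (F2 l) \<le> K"
    and centre: "(F1 0, F2 0) = z"
    and poles: "(F1 x1, F2 x1) = (a, 0)" "(F1 x2, F2 x2) = (b, 0)"
    and in_disc: "x1 \<in> unit_disc" "x2 \<in> unit_disc" "x3 \<in> unit_disc" "x4 \<in> unit_disc"
    and nodes: "node_poly x1 x2 x4 x3 \<noteq> 0" "node_poly x2 x1 x3 x4 \<noteq> 0"
    and small1: "8 * (cmod (b - F1 x3) / cmod (node_poly x1 x2 x4 x3)
                    + cmod (a - F1 x4) / cmod (node_poly x2 x1 x3 x4)) < 1 - K"
    and small2: "8 * (cmod (e - F2 x3) / cmod (node_poly x1 x2 x4 x3)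
                    + cmod (e - F2 x4) / cmod (node_poly x2 x1 x3 x4)) < 1 - K"
  shows "coman_lempert [(a, 0), (b, 0), (b, e), (a, e)] z
    \<le> elog (cmod x1) + elog (cmod x2) + elog (cmod x3) + elog (cmod x4)"
proof -
  obtain G1 where G1: "G1 holomorphic_on unit_disc" "G1 ` unit_disc \<subseteq> unit_disc"
    "G1 0 = F1 0" "G1 x1 = F1 x1" "G1 x2 = F1 x2" "G1 x3 = b" "G1 x4 = a"
    using interpolating_disc_map[OF holo(1) _ in_disc nodes small1] bound by blast
  obtain G2 where G2: "G2 holomorphic_on unit_disc" "G2 ` unit_disc \<subseteq> unit_disc"
    "G2 0 = F2 0" "G2 x1 = F2 x1" "G2 x2 = F2 x2" "G2 x3 = e" "G2 x4 = e"
    using interpolating_disc_map[OF holo(2) _ in_disc nodes small2] bound by blast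
  have "disc_map G1 G2" using G1 G2 by (simp add: disc_map_def)
  then show ?thesis
    by (rule coman_lempert_four_poles_le) (use G1 G2 centre poles in_disc in auto)
qed

text \<open>\<open>(F1, F2)\<close> takes the value \<open>(a, 0)\<close> at \<open>x\<close> and, up to an error \<open>o(h \<epsilon>)\<close>, the value
  \<open>(a, \<epsilon>)\<close> at \<open>x + h \<epsilon> \<rightarrow> p\<close>. Such an error is removed by Lagrange interpolation at no cost
  even when \<open>p = x\<close>, because the node factor \<open>h \<epsilon>\<close> of the interpolation weight cancels it.\<close>
definition approx_pole_pair :: "(complex \<Rightarrow> complex) \<Rightarrow> (complex \<Rightarrow> complex) \<Rightarrow> complex \<Rightarrow> real \<Rightarrow> bool" where
  "approx_pole_pair F1 F2 a P \<longleftrightarrow> (\<exists>x p h. x \<in> unit_disc \<and> p \<in> unit_disc \<and> p \<noteq> 0 \<and>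
     cmod x * cmod p = P \<and> F1 x = a \<and> F2 x = 0 \<and> F1 p = a \<and>
     (h \<longlongrightarrow> p - x) (at 0) \<and> (\<forall>\<^sub>F \<epsilon> in at 0. h \<epsilon> \<noteq> 0) \<and>
     ((\<lambda>\<epsilon>. (a - F1 (x + h \<epsilon>)) / h \<epsilon>) \<longlongrightarrow> 0) (at 0) \<and>
     ((\<lambda>\<epsilon>. (\<epsilon> - F2 (x + h \<epsilon>)) / h \<epsilon>) \<longlongrightarrow> 0) (at 0))"

lemma tendsto_interpolation_error:
  fixes c h y u :: "'a \<Rightarrow> complex"
  assumes "((\<lambda>e. c e / h e) \<longlongrightarrow> 0) F" "(y \<longlongrightarrow> q) F" "(u \<longlongrightarrow> q') F"
    and "q \<noteq> 0" "q \<noteq> x" "q \<noteq> q'" and "\<forall>\<^sub>F e in F. y e - x' = h e"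
  shows "((\<lambda>e. cmod (c e) / cmod (node_poly x x' (u e) (y e))) \<longlongrightarrow> 0) F"
proof -
  have "((\<lambda>e. cmod (c e / h e) / cmod (y e * (y e - x) * (y e - u e)))
      \<longlongrightarrow> cmod 0 / cmod (q * (q - x) * (q - q'))) F"
    using assms by (intro tendsto_intros) auto
  then have "((\<lambda>e. cmod (c e / h e) / cmod (y e * (y e - x) * (y e - u e))) \<longlongrightarrow> 0) F"
    by simp
  then show ?thesis
    by (rule Lim_transform_eventually)
      (use assms(7) in \<open>eventually_elim, simp add: node_poly_def norm_mult norm_divide mult_ac\<close>)
qed

lemma eventually_interpolation_correction_small:
  fixes c3 c4 h k :: "'a \<Rightarrow> complex"
  assumes k: "(k \<longlongrightarrow> p3 - x2) F" and h: "(h \<longlongrightarrow> p4 - x1) F"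
    and "p3 \<noteq> 0" "p3 \<noteq> x1" "p4 \<noteq> 0" "p4 \<noteq> x2" "p3 \<noteq> p4"
    and c3: "((\<lambda>e. c3 e / k e) \<longlongrightarrow> 0) F" and c4: "((\<lambda>e. c4 e / h e) \<longlongrightarrow> 0) F" and "K < 1"
  shows "\<forall>\<^sub>F e in F. 8 * (cmod (c3 e) / cmod (node_poly x1 x2 (x1 + h e) (x2 + k e))
                       + cmod (c4 e) / cmod (node_poly x2 x1 (x2 + k e) (x1 + h e))) < 1 - K"
proof -
  have "((\<lambda>e. x2 + k e) \<longlongrightarrow> x2 + (p3 - x2)) F" "((\<lambda>e. x1 + h e) \<longlongrightarrow> x1 + (p4 - x1)) F"
    by (intro tendsto_intros k h)+
  then have x3: "((\<lambda>e. x2 + k e) \<longlongrightarrow> p3) F" and x4: "((\<lambda>e. x1 + h e) \<longlongrightarrow> p4) F"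
    by simp_all
  have "((\<lambda>e. cmod (c3 e) / cmod (node_poly x1 x2 (x1 + h e) (x2 + k e))) \<longlongrightarrow> 0) F"
    using c3 x3 x4 assms(3-7) by (intro tendsto_interpolation_error[where h = k and q = p3 and q' = p4]) auto
  moreover have "((\<lambda>e. cmod (c4 e) / cmod (node_poly x2 x1 (x2 + k e) (x1 + h e))) \<longlongrightarrow> 0) F"
    using c4 x3 x4 assms(3-7) by (intro tendsto_interpolation_error[where h = h and q = p4 and q' = p3]) auto
  ultimately have "((\<lambda>e. 8 * (cmod (c3 e) / cmod (node_poly x1 x2 (x1 + h e) (x2 + k e))
      + cmod (c4 e) / cmod (node_poly x2 x1 (x2 + k e) (x1 + h e)))) \<longlongrightarrow> 8 * (0 + 0)) F"
    by (intro tendsto_intros)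
  then show ?thesis
    by (rule order_tendstoD(2)) (use \<open>K < 1\<close> in simp)
qed

abbreviation coman_limsup :: "complex \<Rightarrow> complex \<Rightarrow> complex \<times> complex \<Rightarrow> ereal" where
  "coman_limsup a b z \<equiv> Limsup (at 0) (\<lambda>\<epsilon>. coman_lempert [(a, 0), (b, 0), (b, \<epsilon>), (a, \<epsilon>)] z)"

lemma Limsup_coman_lempert_le:
  assumes holo: "F1 holomorphic_on unit_disc" "F2 holomorphic_on unit_disc"
    and bound: "\<forall>l\<in>unit_disc. cmod (F1 l) \<le> K \<and> cmod (F2 l) \<le> K" and "K < 1"
    and centre: "(F1 0, F2 0) = z"
    and pole_a: "approx_pole_pair F1 F2 a P" and pole_b: "approx_pole_pair F1 F2 b Q"
    and "a \<noteq> b"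
  shows "coman_limsup a b z \<le> elog (P * Q)"
proof -
  obtain x1 p4 h where x1: "x1 \<in> unit_disc" "p4 \<in> unit_disc" "p4 \<noteq> 0" "cmod x1 * cmod p4 = P"
    "F1 x1 = a" "F2 x1 = 0" "F1 p4 = a" "(h \<longlongrightarrow> p4 - x1) (at 0)" "\<forall>\<^sub>F e in at 0. h e \<noteq> 0"
    "((\<lambda>e. (a - F1 (x1 + h e)) / h e) \<longlongrightarrow> 0) (at 0)" "((\<lambda>e. (e - F2 (x1 + h e)) / h e) \<longlongrightarrow> 0) (at 0)"
    using pole_a unfolding approx_pole_pair_def by blast
  obtain x2 p3 k where x2: "x2 \<in> unit_disc" "p3 \<in> unit_disc" "p3 \<noteq> 0" "cmod x2 * cmod p3 = Q"
    "F1 x2 = b" "F2 x2 = 0" "F1 p3 = b" "(k \<longlongrightarrow> p3 - x2) (at 0)" "\<forall>\<^sub>F e in at 0. k e \<noteq> 0"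
    "((\<lambda>e. (b - F1 (x2 + k e)) / k e) \<longlongrightarrow> 0) (at 0)" "((\<lambda>e. (e - F2 (x2 + k e)) / k e) \<longlongrightarrow> 0) (at 0)"
    using pole_b unfolding approx_pole_pair_def by blast
  have "((\<lambda>e. x2 + k e) \<longlongrightarrow> x2 + (p3 - x2)) (at 0)" "((\<lambda>e. x1 + h e) \<longlongrightarrow> x1 + (p4 - x1)) (at 0)"
    by (intro tendsto_intros x1(8) x2(8))+
  then have x3: "((\<lambda>e. x2 + k e) \<longlongrightarrow> p3) (at 0)" and x4: "((\<lambda>e. x1 + h e) \<longlongrightarrow> p4) (at 0)"
    by simp_all
  have distinct: "p3 \<noteq> x1" "p4 \<noteq> x2" "p3 - p4 \<noteq> 0"
    using x1 x2 \<open>a \<noteq> b\<close> by auto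
  have "\<forall>\<^sub>F e in at 0. x2 + k e \<in> unit_disc" "\<forall>\<^sub>F e in at 0. x1 + h e \<in> unit_disc"
    using topological_tendstoD[OF x3 open_ball x2(2)] topological_tendstoD[OF x4 open_ball x1(2)] .
  moreover have "\<forall>\<^sub>F e in at 0. node_poly x1 x2 (x1 + h e) (x2 + k e) \<noteq> 0 \<and> node_poly x2 x1 (x2 + k e) (x1 + h e) \<noteq> 0"
    using tendsto_imp_eventually_ne[OF x3 x2(3)] tendsto_imp_eventually_ne[OF x3 distinct(1)]
      tendsto_imp_eventually_ne[OF x4 x1(3)] tendsto_imp_eventually_ne[OF x4 distinct(2)]
      tendsto_imp_eventually_ne[OF tendsto_diff[OF x3 x4] distinct(3)] x1(9) x2(9)
    by eventually_elim (auto simp: node_poly_def)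
  moreover have "\<forall>\<^sub>F e in at 0. 8 * (cmod (b - F1 (x2 + k e)) / cmod (node_poly x1 x2 (x1 + h e) (x2 + k e))
      + cmod (a - F1 (x1 + h e)) / cmod (node_poly x2 x1 (x2 + k e) (x1 + h e))) < 1 - K"
    and "\<forall>\<^sub>F e in at 0. 8 * (cmod (e - F2 (x2 + k e)) / cmod (node_poly x1 x2 (x1 + h e) (x2 + k e))
      + cmod (e - F2 (x1 + h e)) / cmod (node_poly x2 x1 (x2 + k e) (x1 + h e))) < 1 - K"
    using x1(3,8,10,11) x2(3,8,10,11) distinct \<open>K < 1\<close>
    by (intro eventually_interpolation_correction_small; force)+
  ultimately have "\<forall>\<^sub>F e in at 0. coman_lempert [(a, 0), (b, 0), (b, e), (a, e)] z
      \<le> elog (cmod x1 * cmod x2 * cmod (x2 + k e) * cmod (x1 + h e))"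
  proof eventually_elim
    case (elim e)
    have "coman_lempert [(a, 0), (b, 0), (b, e), (a, e)] z
        \<le> elog (cmod x1) + elog (cmod x2) + elog (cmod (x2 + k e)) + elog (cmod (x1 + h e))"
      using elim x1 x2 by (intro coman_lempert_le_by_interpolation[OF holo bound centre]) auto
    then show ?case by (simp add: elog_mult)
  qed
  then have "coman_limsup a b z \<le> Limsup (at 0) (\<lambda>e. elog (cmod x1 * cmod x2 * cmod (x2 + k e) * cmod (x1 + h e)))"
    by (rule Limsup_mono)
  also have "\<dots> = elog (cmod x1 * cmod x2 * cmod p3 * cmod p4)"
    by (intro lim_imp_Limsup tendsto_elog tendsto_intros x3 x4) auto
  also have "\<dots> = elog (P * Q)"
    unfolding x1(4)[symmetric] x2(4)[symmetric] by (simp add: mult_ac)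
  finally show ?thesis .
qed

lemma approx_pole_pair_distinct:
  assumes "x \<in> unit_disc" "p \<in> unit_disc" "p \<noteq> 0" "p \<noteq> x"
    and "F1 x = a" "F2 x = 0" "F1 p = a" "F2 p = 0"
  shows "approx_pole_pair F1 F2 a (cmod x * cmod p)"
proof -
  have "((\<lambda>e. e / (p - x)) \<longlongrightarrow> 0 / (p - x)) (at 0)"
    using assms(4) by (intro tendsto_intros) simp
  then show ?thesis
    unfolding approx_pole_pair_def using assms by (intro exI[of _ x] exI[of _ p] exI[of _ "\<lambda>_. p - x"]) auto
qed

lemma eventually_at_0_nonzero: "(\<And>e. e \<noteq> 0 \<Longrightarrow> P e) \<Longrightarrow> \<forall>\<^sub>F e in at 0. P e"
  by (auto simp: eventually_at_filter)

text \<open>Take \<open>h \<epsilon> = \<epsilon> / (D + u \<surd>|\<epsilon>|)\<close> with \<open>u\<close> the direction of \<open>D\<close>; the \<open>\<surd>|\<epsilon>|\<close> term keeps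
  \<open>h \<epsilon> \<noteq> 0\<close> and \<open>h \<epsilon> \<rightarrow> 0\<close> also when \<open>D = 0\<close>.\<close>
lemma exists_vanishing_with_ratio_tendsto:
  fixes D :: complex
  shows "\<exists>h. (h \<longlongrightarrow> 0) (at 0) \<and> (\<forall>\<^sub>F \<epsilon> in at 0. h \<epsilon> \<noteq> 0) \<and> ((\<lambda>\<epsilon>. \<epsilon> / h \<epsilon>) \<longlongrightarrow> D) (at 0)"
proof (intro exI conjI)
  define u where "u = (if D = 0 then 1 else D / of_real (cmod D))"
  define den where "den \<epsilon> = u * of_real (cmod D + sqrt (cmod \<epsilon>))" for \<epsilon> :: complex
  have D_eq: "D = u * of_real (cmod D)" and norm_u: "cmod u = 1"
    by (simp_all add: u_def norm_divide)
  have norm_den: "cmod (den \<epsilon>) = cmod D + sqrt (cmod \<epsilon>)" for \<epsilon>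
    by (simp add: den_def norm_mult norm_u del: of_real_add)
  have den_nonzero: "den \<epsilon> \<noteq> 0" if "\<epsilon> \<noteq> 0" for \<epsilon>
  proof -
    have "0 < cmod (den \<epsilon>)" using that by (simp add: norm_den add_nonneg_pos)
    then show ?thesis by auto
  qed
  show "\<forall>\<^sub>F \<epsilon> in at 0. \<epsilon> / den \<epsilon> \<noteq> 0"
    by (rule eventually_at_0_nonzero) (simp add: den_nonzero)
  have "(den \<longlongrightarrow> u * of_real (cmod D + sqrt (cmod 0))) (at 0)"
    unfolding den_def by (intro tendsto_intros)
  then have "(den \<longlongrightarrow> D) (at 0)" using D_eq by simp
  then show "((\<lambda>\<epsilon>. \<epsilon> / (\<epsilon> / den \<epsilon>)) \<longlongrightarrow> D) (at 0)"
    by (rule Lim_transform_eventually) (simp add: eventually_at_0_nonzero den_nonzero)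
  have bound: "cmod (\<epsilon> / den \<epsilon>) \<le> sqrt (cmod \<epsilon>)" for \<epsilon>
  proof (cases "\<epsilon> = 0")
    case False
    have "cmod (\<epsilon> / den \<epsilon>) = cmod \<epsilon> / (cmod D + sqrt (cmod \<epsilon>))" by (simp add: norm_divide norm_den)
    also have "\<dots> \<le> cmod \<epsilon> / sqrt (cmod \<epsilon>)"
      using False by (intro divide_left_mono) (auto intro!: mult_pos_pos add_nonneg_pos)
    also have "\<dots> = sqrt (cmod \<epsilon>)" by (simp add: real_div_sqrt)
    finally show ?thesis .
  qed simp
  have "((\<lambda>\<epsilon>. sqrt (cmod \<epsilon>)) \<longlongrightarrow> sqrt (cmod 0)) (at 0)"
    by (intro tendsto_intros)
  then have "((\<lambda>\<epsilon>. sqrt (cmod \<epsilon>)) \<longlongrightarrow> 0) (at 0)"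
    by simp
  then show "((\<lambda>\<epsilon>. \<epsilon> / den \<epsilon>) \<longlongrightarrow> 0) (at 0)"
    by (rule Lim_null_comparison[OF always_eventually, rotated]) (simp add: bound)
qed

text \<open>The second pole approaches the critical point \<open>x\<close> as \<open>x + h \<epsilon>\<close> with \<open>\<epsilon> / h \<epsilon> \<rightarrow> F2'(x)\<close>.\<close>
lemma approx_pole_pair_critical:
  assumes holo: "F1 holomorphic_on unit_disc" "F2 holomorphic_on unit_disc"
    and "x \<in> unit_disc" "x \<noteq> 0" "F1 x = a" "F2 x = 0" "deriv F1 x = 0"
  shows "approx_pole_pair F1 F2 a (cmod x ^ 2)"
proof -
  obtain h where h: "(h \<longlongrightarrow> 0) (at 0)" "\<forall>\<^sub>F \<epsilon> in at 0. h \<epsilon> \<noteq> 0"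
    and ratio: "((\<lambda>\<epsilon>. \<epsilon> / h \<epsilon>) \<longlongrightarrow> deriv F2 x) (at 0)"
    using exists_vanishing_with_ratio_tendsto by blast
  have "(F1 has_field_derivative 0) (at x)" "(F2 has_field_derivative deriv F2 x) (at x)"
    using holomorphic_derivI[OF holo(1) open_ball \<open>x \<in> unit_disc\<close>]
      holomorphic_derivI[OF holo(2) open_ball \<open>x \<in> unit_disc\<close>] assms(7) by simp_all
  then have quotient1: "((\<lambda>t. (F1 (x + t) - F1 x) / t) \<longlongrightarrow> 0) (at 0)"
    and quotient2: "((\<lambda>t. (F2 (x + t) - F2 x) / t) \<longlongrightarrow> deriv F2 x) (at 0)"
    by (simp_all add: DERIV_def)
  have "filterlim h (at 0) (at 0)"
    using h by (rule filterlim_atI)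
  from filterlim_compose[OF quotient1 this] filterlim_compose[OF quotient2 this]
  have diff1: "((\<lambda>\<epsilon>. (F1 (x + h \<epsilon>) - F1 x) / h \<epsilon>) \<longlongrightarrow> 0) (at 0)"
    and diff2: "((\<lambda>\<epsilon>. (F2 (x + h \<epsilon>) - F2 x) / h \<epsilon>) \<longlongrightarrow> deriv F2 x) (at 0)" .
  have "((\<lambda>\<epsilon>. - ((F1 (x + h \<epsilon>) - F1 x) / h \<epsilon>)) \<longlongrightarrow> - 0) (at 0)"
    by (intro tendsto_intros diff1)
  then have err1: "((\<lambda>\<epsilon>. (a - F1 (x + h \<epsilon>)) / h \<epsilon>) \<longlongrightarrow> 0) (at 0)"
    using assms(5) by (simp add: minus_divide_left)
  have "((\<lambda>\<epsilon>. \<epsilon> / h \<epsilon> - (F2 (x + h \<epsilon>) - F2 x) / h \<epsilon>) \<longlongrightarrow> deriv F2 x - deriv F2 x) (at 0)"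
    by (intro tendsto_intros ratio diff2)
  then have err2: "((\<lambda>\<epsilon>. (\<epsilon> - F2 (x + h \<epsilon>)) / h \<epsilon>) \<longlongrightarrow> 0) (at 0)"
    using assms(6) by (simp add: diff_divide_distrib)
  show ?thesis
    unfolding approx_pole_pair_def power2_eq_square
    using assms h err1 err2 by (intro exI[of _ x] exI[of _ x] exI[of _ h]) simp
qed

lemma disc_self_map_bounded_on_cball:
  assumes "continuous_on unit_disc f" "f ` unit_disc \<subseteq> unit_disc" "r < 1"
  shows "\<exists>K<1. \<forall>y\<in>cball 0 r. cmod (f y) \<le> K"
proof (cases "r < 0")
  case False
  have sub: "cball 0 r \<subseteq> unit_disc" using assms(3) by auto
  have "continuous_on (cball 0 r) (\<lambda>y. cmod (f y))"
    using continuous_on_subset[OF assms(1) sub] by (intro continuous_intros)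
  then obtain y0 where y0: "y0 \<in> cball 0 r" "\<forall>y\<in>cball 0 r. cmod (f y) \<le> cmod (f y0)"
    using continuous_attains_sup[OF compact_cball] False by (metis cball_eq_empty)
  moreover have "f y0 \<in> unit_disc" using y0(1) sub assms(2) by blast
  then have "cmod (f y0) < 1" by simp
  ultimately show ?thesis by blast
qed (auto intro: exI[of _ 0])

lemma shrunk_disc_self_map:
  fixes \<phi> G :: "complex \<Rightarrow> complex"
  assumes \<phi>: "\<phi> holomorphic_on unit_disc" "\<phi> ` unit_disc \<subseteq> unit_disc"
    and G: "G holomorphic_on unit_disc" "G ` unit_disc \<subseteq> unit_disc" and r: "0 < r" "r < 1"
  shows "(\<lambda>l. \<phi> (of_real r * G l)) holomorphic_on unit_disc"
    and "\<exists>K<1. \<forall>l\<in>unit_disc. cmod (\<phi> (of_real r * G l)) \<le> K"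
    and "l \<in> unit_disc \<Longrightarrow>
      deriv (\<lambda>l. \<phi> (of_real r * G l)) l = deriv \<phi> (of_real r * G l) * (of_real r * deriv G l)"
proof -
  have in_cball: "of_real r * G l \<in> cball 0 r" if "l \<in> unit_disc" for l
  proof -
    have "G l \<in> unit_disc" using G(2) that by blast
    then show ?thesis using r by (simp add: norm_mult mult_left_le)
  qed
  then have in_disc: "of_real r * G l \<in> unit_disc" if "l \<in> unit_disc" for l
    using that r by (meson mem_cball_0 mem_ball_0 le_less_trans)
  have rG: "(\<lambda>l. of_real r * G l) holomorphic_on unit_disc"
    by (intro holomorphic_intros G(1))
  show "(\<lambda>l. \<phi> (of_real r * G l)) holomorphic_on unit_disc"
    using holomorphic_on_compose_gen[OF rG \<phi>(1)] in_disc by (auto simp: o_def image_subset_iff)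
  obtain K where "K < 1" "\<forall>y\<in>cball 0 r. cmod (\<phi> y) \<le> K"
    using disc_self_map_bounded_on_cball[OF holomorphic_on_imp_continuous_on[OF \<phi>(1)] \<phi>(2) r(2)]
    by blast
  then show "\<exists>K<1. \<forall>l\<in>unit_disc. cmod (\<phi> (of_real r * G l)) \<le> K"
    using in_cball by blast
  assume l: "l \<in> unit_disc"
  have "deriv (\<phi> \<circ> (\<lambda>l. of_real r * G l)) l = deriv \<phi> (of_real r * G l) * deriv (\<lambda>l. of_real r * G l) l"
    using holomorphic_on_imp_differentiable_at[OF rG open_ball l]
      holomorphic_on_imp_differentiable_at[OF \<phi>(1) open_ball in_disc[OF l]] by (rule deriv_chain)
  also have "deriv (\<lambda>l. of_real r * G l) l = of_real r * deriv G l"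
    using l by (intro deriv_cmult holomorphic_on_imp_differentiable_at[OF G(1) open_ball])
  finally show "deriv (\<lambda>l. \<phi> (of_real r * G l)) l = deriv \<phi> (of_real r * G l) * (of_real r * deriv G l)"
    by (simp add: o_def)
qed

lemma Limsup_coman_lempert_le_shrunk:
  assumes \<phi>: "disc_map \<phi>1 \<phi>2" "(\<phi>1 0, \<phi>2 0) = z" and r: "0 < r" "r < 1"
    and G: "G holomorphic_on unit_disc" "G ` unit_disc \<subseteq> unit_disc" "G 0 = 0"
    and poles: "approx_pole_pair (\<lambda>l. \<phi>1 (of_real r * G l)) (\<lambda>l. \<phi>2 (of_real r * G l)) a P"
      "approx_pole_pair (\<lambda>l. \<phi>1 (of_real r * G l)) (\<lambda>l. \<phi>2 (of_real r * G l)) b Q"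
    and "a \<noteq> b"
  shows "coman_limsup a b z \<le> elog (P * Q)"
proof -
  note S1 = shrunk_disc_self_map[of \<phi>1, OF _ _ G(1,2) r] and S2 = shrunk_disc_self_map[of \<phi>2, OF _ _ G(1,2) r]
  obtain K1 K2 where "K1 < 1" "\<forall>l\<in>unit_disc. cmod (\<phi>1 (of_real r * G l)) \<le> K1"
    and "K2 < 1" "\<forall>l\<in>unit_disc. cmod (\<phi>2 (of_real r * G l)) \<le> K2"
    using S1(2) S2(2) \<phi>(1) unfolding disc_map_def by blast
  then have "\<forall>l\<in>unit_disc. cmod (\<phi>1 (of_real r * G l)) \<le> max K1 K2 \<and> cmod (\<phi>2 (of_real r * G l)) \<le> max K1 K2"
    by (auto simp: le_max_iff_disj)
  then show ?thesis
    using S1(1) S2(1) \<phi> G(3) poles \<open>a \<noteq> b\<close> \<open>K1 < 1\<close> \<open>K2 < 1\<close> unfolding disc_map_def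
    by (intro Limsup_coman_lempert_le[where K = "max K1 K2"]) auto
qed

lemma approx_pole_pair_shrunk_critical:
  assumes \<phi>: "disc_map \<phi>1 \<phi>2" and r: "0 < r" "r < 1"
    and G: "G holomorphic_on unit_disc" "G ` unit_disc \<subseteq> unit_disc"
    and \<theta>: "\<theta> \<in> unit_disc" "\<theta> \<noteq> 0" "\<phi>1 (of_real r * G \<theta>) = a" "\<phi>2 (of_real r * G \<theta>) = 0"
    and critical: "deriv \<phi>1 (of_real r * G \<theta>) = 0 \<or> deriv G \<theta> = 0"
  shows "approx_pole_pair (\<lambda>l. \<phi>1 (of_real r * G l)) (\<lambda>l. \<phi>2 (of_real r * G l)) a (cmod \<theta> ^ 2)"
proof -
  note S1 = shrunk_disc_self_map[of \<phi>1, OF _ _ G r] and S2 = shrunk_disc_self_map[of \<phi>2, OF _ _ G r]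
  show ?thesis
    using \<phi> \<theta> critical S1(3)[OF _ _ \<theta>(1)]
    by (intro approx_pole_pair_critical S1(1) S2(1)) (auto simp: disc_map_def)
qed

definition blaschke2 :: "complex \<Rightarrow> complex \<Rightarrow> complex \<Rightarrow> complex" where
  "blaschke2 A \<beta> l = l * (A * l + \<beta>) / (cnj \<beta> * l + cnj A)"

lemma blaschke2_norm_identity:
  "cmod (cnj \<beta> * l + cnj A) ^ 2 - cmod (A * l + \<beta>) ^ 2 = (cmod A ^ 2 - cmod \<beta> ^ 2) * (1 - cmod l ^ 2)"
  unfolding cmod_power2 by (simp add: algebra_simps power2_eq_square)

lemma blaschke2_denom_nonzero:
  assumes "cmod \<beta> < cmod A" "cmod l \<le> 1"
  shows "cnj \<beta> * l + cnj A \<noteq> 0"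
proof
  assume "cnj \<beta> * l + cnj A = 0"
  then have "cmod A = cmod \<beta> * cmod l" by (metis add_eq_0_iff complex_mod_cnj norm_minus_cancel norm_mult)
  also have "\<dots> \<le> cmod \<beta>" using assms(2) by (simp add: mult_left_le)
  finally show False using assms(1) by simp
qed

lemma holomorphic_blaschke2:
  assumes "cmod \<beta> < cmod A"
  shows "blaschke2 A \<beta> holomorphic_on unit_disc"
  unfolding blaschke2_def using blaschke2_denom_nonzero[OF assms]
  by (intro holomorphic_intros) auto

lemma blaschke2_in_disc:
  assumes "cmod \<beta> < cmod A" "l \<in> unit_disc"
  shows "blaschke2 A \<beta> l \<in> unit_disc"
proof -
  have l: "cmod l < 1" using assms(2) by simp
  have "0 < (cmod A ^ 2 - cmod \<beta> ^ 2) * (1 - cmod l ^ 2)"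
    using assms(1) l by (intro mult_pos_pos) (simp_all add: power_strict_mono power_less_one_iff)
  then have "cmod (A * l + \<beta>) ^ 2 < cmod (cnj \<beta> * l + cnj A) ^ 2"
    using blaschke2_norm_identity[of \<beta> l A] by linarith
  then have "cmod (A * l + \<beta>) < cmod (cnj \<beta> * l + cnj A)"
    by (rule power2_less_imp_less) simp
  then have "cmod (A * l + \<beta>) / cmod (cnj \<beta> * l + cnj A) < 1"
    by (simp add: divide_less_eq)
  then have "cmod l * (cmod (A * l + \<beta>) / cmod (cnj \<beta> * l + cnj A)) < 1"
    using l by (smt (verit) mult_left_le_one_le norm_ge_zero zero_le_divide_iff)
  then show ?thesis by (simp add: blaschke2_def norm_mult norm_divide)
qed

lemma blaschke2_zeros: "blaschke2 A \<beta> 0 = 0" "A \<noteq> 0 \<Longrightarrow> blaschke2 A \<beta> (- (\<beta> / A)) = 0"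
  by (simp_all add: blaschke2_def)

lemma blaschke2_shrinks_point:
  fixes r :: real
  assumes "\<theta> \<in> unit_disc" "0 < r" "r < 1"
  shows "cmod (of_real r - \<theta>) < cmod (1 - of_real r * cnj \<theta>)"
    and "blaschke2 (1 - of_real r * cnj \<theta>) (of_real r - \<theta>) \<theta> = of_real r * \<theta>"
proof -
  have \<theta>: "cmod \<theta> ^ 2 < 1" using assms(1) by (simp add: power_less_one_iff)
  have "cmod (1 - of_real r * cnj \<theta>) ^ 2 - cmod (of_real r - \<theta>) ^ 2 = (1 - r ^ 2) * (1 - cmod \<theta> ^ 2)"
    unfolding cmod_power2 by (simp add: algebra_simps power2_eq_square)
  moreover have "0 < (1 - r ^ 2) * (1 - cmod \<theta> ^ 2)"
    using assms \<theta> by (intro mult_pos_pos) (simp_all add: power_less_one_iff)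
  ultimately have "cmod (of_real r - \<theta>) ^ 2 < cmod (1 - of_real r * cnj \<theta>) ^ 2" by linarith
  then show "cmod (of_real r - \<theta>) < cmod (1 - of_real r * cnj \<theta>)"
    by (rule power2_less_imp_less) simp
  have "\<theta> * cnj \<theta> = of_real (cmod \<theta> ^ 2)" by (rule complex_norm_square[symmetric])
  then have nonzero: "1 - \<theta> * cnj \<theta> \<noteq> 0" using \<theta> by (auto simp del: of_real_power)
  have num: "\<theta> * ((1 - of_real r * cnj \<theta>) * \<theta> + (of_real r - \<theta>)) = of_real r * \<theta> * (1 - \<theta> * cnj \<theta>)"
    and den: "cnj (of_real r - \<theta>) * \<theta> + cnj (1 - of_real r * cnj \<theta>) = 1 - \<theta> * cnj \<theta>"
    by (simp_all add: algebra_simps)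
  show "blaschke2 (1 - of_real r * cnj \<theta>) (of_real r - \<theta>) \<theta> = of_real r * \<theta>"
    unfolding blaschke2_def num den using nonzero by simp
qed

lemma blaschke2_root_in_disc:
  assumes "x * (A * x + \<beta>) = w * (cnj \<beta> * x + cnj A)" "cmod w < 1" "cmod \<beta> < cmod A"
  shows "cmod x < 1"
proof (rule ccontr)
  assume "\<not> cmod x < 1"
  then have x: "1 \<le> cmod x" by simp
  have "A * x + \<beta> \<noteq> 0"
  proof
    assume "A * x + \<beta> = 0"
    then have "\<beta> = - (A * x)" by (simp add: add_eq_0_iff)
    then have "cmod \<beta> = cmod A * cmod x" by (simp add: norm_mult)
    moreover have "cmod A * 1 \<le> cmod A * cmod x" using x by (intro mult_left_mono) auto
    ultimately show False using assms(3) by simp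
  qed
  have "(cmod A ^ 2 - cmod \<beta> ^ 2) * (1 - cmod x ^ 2) \<le> 0"
    using x assms(3) by (intro mult_nonneg_nonpos) (simp_all add: power_mono one_le_power)
  then have "cmod (cnj \<beta> * x + cnj A) ^ 2 \<le> cmod (A * x + \<beta>) ^ 2"
    using blaschke2_norm_identity[of \<beta> x A] by linarith
  then have "cmod (cnj \<beta> * x + cnj A) \<le> cmod (A * x + \<beta>)"
    by (rule power2_le_imp_le) simp
  then have "cmod w * cmod (cnj \<beta> * x + cnj A) \<le> cmod w * cmod (A * x + \<beta>)"
    by (rule mult_left_mono) simp
  moreover have "cmod x * cmod (A * x + \<beta>) = cmod w * cmod (cnj \<beta> * x + cnj A)"
    using arg_cong[OF assms(1), of cmod] by (simp only: norm_mult)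
  ultimately have "cmod x * cmod (A * x + \<beta>) \<le> cmod w * cmod (A * x + \<beta>)" by simp
  then have "cmod x \<le> cmod w" using \<open>A * x + \<beta> \<noteq> 0\<close> by simp
  then show False using x assms(2) by simp
qed

lemma complex_quadratic_factorization:
  fixes A B C :: complex
  assumes "A \<noteq> 0"
  obtains l1 l2 where "\<And>x. A * x ^ 2 + B * x + C = A * (x - l1) * (x - l2)"
proof
  define s where "s = csqrt (B ^ 2 - 4 * A * C)"
  define l1 where "l1 = (- B + s) / (2 * A)"
  define l2 where "l2 = (- B - s) / (2 * A)"
  have sum: "l1 + l2 = - B / A" using assms by (simp add: l1_def l2_def field_simps)
  have s2: "s ^ 2 = B ^ 2 - 4 * A * C" by (simp add: s_def)
  have "l1 * l2 = (B ^ 2 - s ^ 2) / (4 * A ^ 2)"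
    using assms by (simp add: l1_def l2_def field_simps power2_eq_square)
  also have "\<dots> = C / A" using assms unfolding s2 by (simp add: field_simps power2_eq_square)
  finally have prod: "l1 * l2 = C / A" .
  fix x
  have "A * (x - l1) * (x - l2) = A * x ^ 2 - A * (l1 + l2) * x + A * (l1 * l2)"
    by (simp add: algebra_simps power2_eq_square)
  also have "\<dots> = A * x ^ 2 + B * x + C"
    unfolding sum prod using assms by (simp add: field_simps)
  finally show "A * x ^ 2 + B * x + C = A * (x - l1) * (x - l2)" by simp
qed

lemma blaschke2_preimages:
  assumes \<beta>A: "cmod \<beta> < cmod A" and w: "w \<in> unit_disc"
  obtains l1 l2 where "l1 \<in> unit_disc" "l2 \<in> unit_disc" "blaschke2 A \<beta> l1 = w" "blaschke2 A \<beta> l2 = w"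
    "cmod l1 * cmod l2 = cmod w" "l1 \<noteq> l2 \<or> deriv (blaschke2 A \<beta>) l1 = 0"
proof -
  have A: "A \<noteq> 0" using \<beta>A by auto
  obtain l1 l2 where quadratic: "\<And>x. A * x ^ 2 + (\<beta> - w * cnj \<beta>) * x + - w * cnj A = A * (x - l1) * (x - l2)"
    using complex_quadratic_factorization[OF A] by blast
  have factor: "x * (A * x + \<beta>) - w * (cnj \<beta> * x + cnj A) = A * (x - l1) * (x - l2)" for x
    using quadratic[of x] by (simp add: algebra_simps power2_eq_square)
  have root: "x \<in> unit_disc \<and> blaschke2 A \<beta> x = w" if "x = l1 \<or> x = l2" for x
  proof -
    have eq: "x * (A * x + \<beta>) = w * (cnj \<beta> * x + cnj A)" using factor[of x] that by auto
    then have "cmod x < 1" using blaschke2_root_in_disc w \<beta>A by simp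
    moreover from this have "cnj \<beta> * x + cnj A \<noteq> 0" using blaschke2_denom_nonzero \<beta>A by simp
    ultimately show ?thesis using eq by (simp add: blaschke2_def field_simps)
  qed
  have "cmod l1 * cmod l2 = cmod w"
    using arg_cong[OF quadratic[of 0], of cmod] A by (simp add: norm_mult)
  moreover have "deriv (blaschke2 A \<beta>) l1 = 0" if "l1 = l2"
  proof -
    define D where "D x = cnj \<beta> * x + cnj A" for x
    have l1: "l1 \<in> unit_disc" using root by blast
    have "((\<lambda>x. w + A * (x - l1) ^ 2 / D x) has_field_derivative
        (A * (2 * (l1 - l1)) * D l1 - A * (l1 - l1) ^ 2 * cnj \<beta>) / D l1 ^ 2) (at l1)"
      using blaschke2_denom_nonzero[OF \<beta>A, of l1] l1 unfolding D_def
      by (auto intro!: derivative_eq_intros simp: power2_eq_square)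
    then have "((\<lambda>x. w + A * (x - l1) ^ 2 / D x) has_field_derivative 0) (at l1)" by simp
    then have "(blaschke2 A \<beta> has_field_derivative 0) (at l1)"
    proof (rule has_field_derivative_transform_within_open[OF _ open_ball l1])
      fix x :: complex assume "x \<in> unit_disc"
      then have "D x \<noteq> 0" using blaschke2_denom_nonzero[OF \<beta>A] by (simp add: D_def)
      then show "w + A * (x - l1) ^ 2 / D x = blaschke2 A \<beta> x"
        using factor[of x] that by (simp add: blaschke2_def D_def field_simps power2_eq_square)
    qed
    then show ?thesis by (rule DERIV_imp_deriv)
  qed
  ultimately show ?thesis using that root by blast
qed

lemma approx_pole_pair_shrunk_blaschke2:
  assumes \<phi>: "disc_map \<phi>1 \<phi>2" and r: "0 < r" "r < 1" and \<beta>A: "cmod \<beta> < cmod A"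
    and w: "w \<in> unit_disc" "\<phi>1 (of_real r * w) = a" "\<phi>2 (of_real r * w) = 0" and "w \<noteq> 0 \<or> \<beta> \<noteq> 0"
  shows "approx_pole_pair (\<lambda>l. \<phi>1 (of_real r * blaschke2 A \<beta> l)) (\<lambda>l. \<phi>2 (of_real r * blaschke2 A \<beta> l)) a (cmod w)"
proof -
  have G: "blaschke2 A \<beta> holomorphic_on unit_disc" "blaschke2 A \<beta> ` unit_disc \<subseteq> unit_disc"
    using holomorphic_blaschke2[OF \<beta>A] blaschke2_in_disc[OF \<beta>A] by auto
  show ?thesis
  proof (cases "w = 0")
    case True
    have A: "A \<noteq> 0" using \<beta>A by auto
    have "cmod (\<beta> / A) < 1" using \<beta>A by (simp add: norm_divide divide_less_eq)
    then have "approx_pole_pair (\<lambda>l. \<phi>1 (of_real r * blaschke2 A \<beta> l)) (\<lambda>l. \<phi>2 (of_real r * blaschke2 A \<beta> l))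
        a (cmod 0 * cmod (- (\<beta> / A)))"
      using True w \<open>w \<noteq> 0 \<or> \<beta> \<noteq> 0\<close> A
      by (intro approx_pole_pair_distinct) (auto simp: blaschke2_zeros norm_divide)
    then show ?thesis using True by simp
  next
    case False
    obtain l1 l2 where l: "l1 \<in> unit_disc" "l2 \<in> unit_disc" "blaschke2 A \<beta> l1 = w" "blaschke2 A \<beta> l2 = w"
      "cmod l1 * cmod l2 = cmod w" "l1 \<noteq> l2 \<or> deriv (blaschke2 A \<beta>) l1 = 0"
      using blaschke2_preimages[OF \<beta>A w(1)] by blast
    have "l1 \<noteq> 0" "l2 \<noteq> 0" using l(5) False by auto
    show ?thesis
    proof (cases "l1 = l2")
      case True
      have "approx_pole_pair (\<lambda>l. \<phi>1 (of_real r * blaschke2 A \<beta> l)) (\<lambda>l. \<phi>2 (of_real r * blaschke2 A \<beta> l))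
          a (cmod l1 ^ 2)"
        using l True \<open>l1 \<noteq> 0\<close> w by (intro approx_pole_pair_shrunk_critical[OF \<phi> r G]) auto
      then show ?thesis using l(5) True by (simp add: power2_eq_square)
    next
      case False
      have "approx_pole_pair (\<lambda>l. \<phi>1 (of_real r * blaschke2 A \<beta> l)) (\<lambda>l. \<phi>2 (of_real r * blaschke2 A \<beta> l))
          a (cmod l1 * cmod l2)"
        using l(1-4) False \<open>l2 \<noteq> 0\<close> w(2,3) by (intro approx_pole_pair_distinct) auto
      then show ?thesis using l(5) by simp
    qed
  qed
qed

lemma divide_by_radius_in_disc:
  fixes r :: real
  assumes "cmod \<zeta> < r"
  shows "\<zeta> / of_real r \<in> unit_disc" "of_real r * (\<zeta> / of_real r) = \<zeta>" "cmod (\<zeta> / of_real r) = cmod \<zeta> / r"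
proof -
  have "0 < r" using assms norm_ge_zero[of \<zeta>] by linarith
  then show "cmod (\<zeta> / of_real r) = cmod \<zeta> / r" "of_real r * (\<zeta> / of_real r) = \<zeta>"
    by (simp_all add: norm_divide)
  then show "\<zeta> / of_real r \<in> unit_disc" using assms \<open>0 < r\<close> by (simp add: divide_less_eq)
qed

lemma coman_limsup_le_a0b0:
  assumes "a \<noteq> b" and \<phi>: "disc_map \<phi>1 \<phi>2" "(\<phi>1 0, \<phi>2 0) = z"
    and \<zeta>: "\<zeta>1 \<in> unit_disc" "\<zeta>2 \<in> unit_disc" "(\<phi>1 \<zeta>1, \<phi>2 \<zeta>1) = (a, 0)" "(\<phi>1 \<zeta>2, \<phi>2 \<zeta>2) = (b, 0)"
  shows "coman_limsup a b z \<le> elog (cmod \<zeta>1) + elog (cmod \<zeta>2)"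
proof -
  have "\<forall>\<^sub>F r in at_left 1. 0 < r \<and> r < 1 \<and> max (cmod \<zeta>1) (cmod \<zeta>2) < r ^ 1"
    using \<zeta> by (intro eventually_radius_at_left_1) simp
  then have "\<forall>\<^sub>F r in at_left 1. coman_limsup a b z \<le> elog (cmod \<zeta>1 * cmod \<zeta>2 / r ^ 2)"
  proof eventually_elim
    case (elim r)
    let ?G = "blaschke2 1 (1 / 2)"
    have \<beta>A: "cmod (1 / 2 :: complex) < cmod (1 :: complex)" by simp
    have w1: "\<zeta>1 / of_real r \<in> unit_disc" "of_real r * (\<zeta>1 / of_real r) = \<zeta>1" "cmod (\<zeta>1 / of_real r) = cmod \<zeta>1 / r"
      and w2: "\<zeta>2 / of_real r \<in> unit_disc" "of_real r * (\<zeta>2 / of_real r) = \<zeta>2" "cmod (\<zeta>2 / of_real r) = cmod \<zeta>2 / r"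
      using divide_by_radius_in_disc[of \<zeta>1 r] divide_by_radius_in_disc[of \<zeta>2 r] elim by auto
    have "approx_pole_pair (\<lambda>l. \<phi>1 (of_real r * ?G l)) (\<lambda>l. \<phi>2 (of_real r * ?G l)) a (cmod \<zeta>1 / r)"
      and "approx_pole_pair (\<lambda>l. \<phi>1 (of_real r * ?G l)) (\<lambda>l. \<phi>2 (of_real r * ?G l)) b (cmod \<zeta>2 / r)"
      using approx_pole_pair_shrunk_blaschke2[OF \<phi>(1) _ _ \<beta>A w1(1)] approx_pole_pair_shrunk_blaschke2[OF \<phi>(1) _ _ \<beta>A w2(1)]
        w1 w2 \<zeta> elim by auto
    then have "coman_limsup a b z \<le> elog (cmod \<zeta>1 / r * (cmod \<zeta>2 / r))"
      using \<phi> elim holomorphic_blaschke2[OF \<beta>A] blaschke2_in_disc[OF \<beta>A] blaschke2_zeros(1) \<open>a \<noteq> b\<close>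
      by (intro Limsup_coman_lempert_le_shrunk) auto
    then show ?case by (simp add: power2_eq_square)
  qed
  then have "coman_limsup a b z \<le> elog (cmod \<zeta>1 * cmod \<zeta>2)"
    by (intro le_elog_of_eventually_at_left_1) simp_all
  then show ?thesis by (simp add: elog_mult)
qed

lemma coman_limsup_le_aVbV:
  assumes "a \<noteq> b" and \<phi>: "disc_map \<phi>1 \<phi>2" "(\<phi>1 0, \<phi>2 0) = z"
    and \<zeta>: "\<zeta>1 \<in> unit_disc" "\<zeta>2 \<in> unit_disc" "(\<phi>1 \<zeta>1, \<phi>2 \<zeta>1) = (a, 0)" "(\<phi>1 \<zeta>2, \<phi>2 \<zeta>2) = (b, 0)"
    and critical: "deriv \<phi>1 \<zeta>1 = 0" "deriv \<phi>1 \<zeta>2 = 0"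
  shows "coman_limsup a b z \<le> 2 * elog (cmod \<zeta>1) + 2 * elog (cmod \<zeta>2)"
proof (cases "\<zeta>1 = 0 \<or> \<zeta>2 = 0")
  case True
  then have "elog (cmod \<zeta>1) + elog (cmod \<zeta>2) = -\<infinity>"
    and "2 * elog (cmod \<zeta>1) + 2 * elog (cmod \<zeta>2) = -\<infinity>" by (auto simp: elog_def)
  with coman_limsup_le_a0b0[OF assms(1-7)] show ?thesis by argo
next
  case False
  have "\<forall>\<^sub>F r in at_left 1. 0 < r \<and> r < 1 \<and> max (cmod \<zeta>1) (cmod \<zeta>2) < r ^ 1"
    using \<zeta> by (intro eventually_radius_at_left_1) simp
  then have "\<forall>\<^sub>F r in at_left 1. coman_limsup a b z \<le> elog (cmod \<zeta>1 ^ 2 * cmod \<zeta>2 ^ 2 / r ^ 4)"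
  proof eventually_elim
    case (elim r)
    have G: "(\<lambda>l. l) holomorphic_on unit_disc" "(\<lambda>l. l) ` unit_disc \<subseteq> unit_disc" by auto
    have w1: "\<zeta>1 / of_real r \<in> unit_disc" "of_real r * (\<zeta>1 / of_real r) = \<zeta>1" "cmod (\<zeta>1 / of_real r) = cmod \<zeta>1 / r"
      and w2: "\<zeta>2 / of_real r \<in> unit_disc" "of_real r * (\<zeta>2 / of_real r) = \<zeta>2" "cmod (\<zeta>2 / of_real r) = cmod \<zeta>2 / r"
      using divide_by_radius_in_disc[of \<zeta>1 r] divide_by_radius_in_disc[of \<zeta>2 r] elim by auto
    have "approx_pole_pair (\<lambda>l. \<phi>1 (of_real r * l)) (\<lambda>l. \<phi>2 (of_real r * l)) a (cmod (\<zeta>1 / of_real r) ^ 2)"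
      and "approx_pole_pair (\<lambda>l. \<phi>1 (of_real r * l)) (\<lambda>l. \<phi>2 (of_real r * l)) b (cmod (\<zeta>2 / of_real r) ^ 2)"
      using approx_pole_pair_shrunk_critical[OF \<phi>(1) _ _ G w1(1)] approx_pole_pair_shrunk_critical[OF \<phi>(1) _ _ G w2(1)]
        w1 w2 \<zeta> critical False elim by auto
    then have "coman_limsup a b z \<le> elog ((cmod \<zeta>1 / r) ^ 2 * (cmod \<zeta>2 / r) ^ 2)"
      using Limsup_coman_lempert_le_shrunk[OF \<phi> _ _ G] \<open>a \<noteq> b\<close> elim w1(3) w2(3) by auto
    then show ?case by (simp add: power_divide power_mult_distrib)
  qed
  then have "coman_limsup a b z \<le> elog (cmod \<zeta>1 ^ 2 * cmod \<zeta>2 ^ 2)"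
    by (intro le_elog_of_eventually_at_left_1) simp_all
  then show ?thesis by (simp add: elog_mult elog_power2)
qed

text \<open>\<open>G\<close> sends \<open>\<theta> = \<zeta>/r\<^sup>2\<close> to \<open>\<zeta>/r\<close> (\<open>blaschke2_shrinks_point\<close>), so the critical point \<open>\<zeta>\<close> of
  \<open>\<phi>1\<close> pulls back at the cost of a factor \<open>r\<^sup>2\<close> only, while the two preimages of \<open>\<eta>/r\<close> still
  have product \<open>|\<eta>|/r\<close>.\<close>
lemma approx_pole_pairs_mixed:
  assumes \<phi>: "disc_map \<phi>1 \<phi>2" and r: "0 < r" "r < 1"
    and \<zeta>: "\<zeta> \<noteq> 0" "cmod \<zeta> < r ^ 3" "(\<phi>1 \<zeta>, \<phi>2 \<zeta>) = (v, 0)" "deriv \<phi>1 \<zeta> = 0"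
    and \<eta>: "cmod \<eta> < r" "(\<phi>1 \<eta>, \<phi>2 \<eta>) = (w, 0)"
  obtains G where "G holomorphic_on unit_disc" "G ` unit_disc \<subseteq> unit_disc" "G 0 = 0"
    "approx_pole_pair (\<lambda>l. \<phi>1 (of_real r * G l)) (\<lambda>l. \<phi>2 (of_real r * G l)) v (cmod \<zeta> ^ 2 / r ^ 4)"
    "approx_pole_pair (\<lambda>l. \<phi>1 (of_real r * G l)) (\<lambda>l. \<phi>2 (of_real r * G l)) w (cmod \<eta> / r)"
proof -
  define \<theta> where "\<theta> = \<zeta> / of_real (r ^ 2)"
  define A where "A = 1 - of_real r * cnj \<theta>"
  define \<beta> where "\<beta> = of_real r - \<theta>"
  have norm_\<theta>: "cmod \<theta> = cmod \<zeta> / r ^ 2" using r by (simp add: \<theta>_def norm_divide norm_power)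
  have "r ^ 3 \<le> r ^ 2" using r by (intro power_decreasing) auto
  then have "cmod \<zeta> < r ^ 2" using \<zeta>(2) by linarith
  then have "cmod \<theta> < r" "cmod \<theta> < 1"
    using \<zeta>(2) r by (simp_all add: norm_\<theta> divide_less_eq power3_eq_cube power2_eq_square mult.assoc)
  then have \<theta>: "\<theta> \<in> unit_disc" "\<theta> \<noteq> 0" "\<beta> \<noteq> 0"
    using \<zeta>(1) r by (auto simp: \<theta>_def \<beta>_def)
  note shrink = blaschke2_shrinks_point[OF \<theta>(1) r, folded A_def \<beta>_def]
  let ?G = "blaschke2 A \<beta>"
  have G: "?G holomorphic_on unit_disc" "?G ` unit_disc \<subseteq> unit_disc" "?G 0 = 0"
    using holomorphic_blaschke2[OF shrink(1)] blaschke2_in_disc[OF shrink(1)] blaschke2_zeros(1) by auto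
  have "of_real r * ?G \<theta> = of_real r * (of_real r * \<theta>)" by (simp only: shrink(2))
  also have "\<dots> = \<zeta>" using r by (simp add: \<theta>_def power2_eq_square)
  finally have "approx_pole_pair (\<lambda>l. \<phi>1 (of_real r * ?G l)) (\<lambda>l. \<phi>2 (of_real r * ?G l)) v (cmod \<theta> ^ 2)"
    using \<zeta> \<theta> by (intro approx_pole_pair_shrunk_critical[OF \<phi> r G(1,2)]) auto
  moreover have "approx_pole_pair (\<lambda>l. \<phi>1 (of_real r * ?G l)) (\<lambda>l. \<phi>2 (of_real r * ?G l)) w (cmod (\<eta> / of_real r))"
    using divide_by_radius_in_disc[OF \<eta>(1)] \<eta>(2) \<theta>(3)
    by (intro approx_pole_pair_shrunk_blaschke2[OF \<phi> r shrink(1)]) auto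
  ultimately show ?thesis
    using that[OF G] divide_by_radius_in_disc(3)[OF \<eta>(1)] norm_\<theta> by (simp add: power_divide power_mult)
qed

lemma coman_limsup_le_mixed:
  assumes "v \<noteq> w" and \<phi>: "disc_map \<phi>1 \<phi>2" "(\<phi>1 0, \<phi>2 0) = z"
    and \<zeta>: "\<zeta> \<in> unit_disc" "(\<phi>1 \<zeta>, \<phi>2 \<zeta>) = (v, 0)" "deriv \<phi>1 \<zeta> = 0"
    and \<eta>: "\<eta> \<in> unit_disc" "(\<phi>1 \<eta>, \<phi>2 \<eta>) = (w, 0)"
  shows "coman_limsup v w z \<le> 2 * elog (cmod \<zeta>) + elog (cmod \<eta>)"
    and "coman_limsup w v z \<le> 2 * elog (cmod \<zeta>) + elog (cmod \<eta>)"
proof -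
  have "coman_limsup v w z \<le> elog (cmod \<zeta> ^ 2 * cmod \<eta>) \<and> coman_limsup w v z \<le> elog (cmod \<zeta> ^ 2 * cmod \<eta>)"
  proof (cases "\<zeta> = 0")
    case True
    then have "elog (cmod \<zeta>) + elog (cmod \<eta>) = elog (cmod \<zeta> ^ 2 * cmod \<eta>)"
      and "elog (cmod \<eta>) + elog (cmod \<zeta>) = elog (cmod \<zeta> ^ 2 * cmod \<eta>)"
      by (auto simp: elog_def)
    then show ?thesis
      using coman_limsup_le_a0b0[OF \<open>v \<noteq> w\<close> \<phi> \<zeta>(1) \<eta>(1) \<zeta>(2) \<eta>(2)]
        coman_limsup_le_a0b0[OF \<open>v \<noteq> w\<close>[symmetric] \<phi> \<eta>(1) \<zeta>(1) \<eta>(2) \<zeta>(2)]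
      by metis
  next
    case False
    have "\<forall>\<^sub>F r in at_left 1. 0 < r \<and> r < 1 \<and> max (cmod \<zeta>) (cmod \<eta>) < r ^ 3"
      using \<zeta>(1) \<eta>(1) by (intro eventually_radius_at_left_1) simp
    then have "\<forall>\<^sub>F r in at_left 1. coman_limsup v w z \<le> elog (cmod \<zeta> ^ 2 * cmod \<eta> / r ^ 5)
        \<and> coman_limsup w v z \<le> elog (cmod \<zeta> ^ 2 * cmod \<eta> / r ^ 5)"
    proof eventually_elim
      case (elim r)
      have "r ^ 3 \<le> r ^ 1" using elim by (intro power_decreasing) auto
      then have "cmod \<eta> < r" using elim by simp
      then obtain G where G: "G holomorphic_on unit_disc" "G ` unit_disc \<subseteq> unit_disc" "G 0 = 0"
        "approx_pole_pair (\<lambda>l. \<phi>1 (of_real r * G l)) (\<lambda>l. \<phi>2 (of_real r * G l)) v (cmod \<zeta> ^ 2 / r ^ 4)"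
        "approx_pole_pair (\<lambda>l. \<phi>1 (of_real r * G l)) (\<lambda>l. \<phi>2 (of_real r * G l)) w (cmod \<eta> / r)"
        using approx_pole_pairs_mixed[OF \<phi>(1) _ _ False _ \<zeta>(2,3) _ \<eta>(2)] elim by auto
      have "coman_limsup v w z \<le> elog (cmod \<zeta> ^ 2 / r ^ 4 * (cmod \<eta> / r))"
        using elim by (intro Limsup_coman_lempert_le_shrunk[OF \<phi> _ _ G(1-3) G(4,5) \<open>v \<noteq> w\<close>]) auto
      moreover have "coman_limsup w v z \<le> elog (cmod \<eta> / r * (cmod \<zeta> ^ 2 / r ^ 4))"
        using elim by (intro Limsup_coman_lempert_le_shrunk[OF \<phi> _ _ G(1-3) G(5,4) \<open>v \<noteq> w\<close>[symmetric]]) auto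
      moreover have "cmod \<zeta> ^ 2 / r ^ 4 * (cmod \<eta> / r) = cmod \<zeta> ^ 2 * cmod \<eta> / r ^ 5"
        by (simp add: eval_nat_numeral)
      ultimately show ?case by (simp only: mult.commute[of "cmod \<eta> / r"])
    qed
    then show ?thesis
      by (auto intro: le_elog_of_eventually_at_left_1 elim: eventually_mono)
  qed
  then show "coman_limsup v w z \<le> 2 * elog (cmod \<zeta>) + elog (cmod \<eta>)"
    and "coman_limsup w v z \<le> 2 * elog (cmod \<zeta>) + elog (cmod \<eta>)"
    by (simp_all add: elog_mult elog_power2)
qed

theorem mainTheorem16:
  fixes a b :: complex and z :: "complex \<times> complex"
  assumes "a \<in> unit_disc" and "b \<in> unit_disc" and "a \<noteq> b"
    and "fst z \<in> unit_disc" and "snd z \<in> unit_disc"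
  shows "Limsup (at (0::complex))
           (\<lambda>\<epsilon>. coman_lempert [(a, 0), (b, 0), (b, \<epsilon>), (a, \<epsilon>)] z)
         \<le> min (min (L_a0b0 a b z) (L_aVb0 a b z)) (min (L_a0bV a b z) (L_aVbV a b z))"
proof -
  \<comment> \<open>only \<open>a \<noteq> b\<close> is needed\<close>
  have "coman_limsup a b z \<le> L_a0b0 a b z"
    unfolding L_a0b0_def by (rule Inf_greatest) (use coman_limsup_le_a0b0[OF \<open>a \<noteq> b\<close>] in blast)
  moreover have "coman_limsup a b z \<le> L_aVb0 a b z"
    unfolding L_aVb0_def by (rule Inf_greatest) (use coman_limsup_le_mixed(1)[OF \<open>a \<noteq> b\<close>] in blast)
  moreover have "coman_limsup a b z \<le> L_a0bV a b z"
    unfolding L_a0bV_def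
    by (rule Inf_greatest) (use coman_limsup_le_mixed(2)[OF \<open>a \<noteq> b\<close>[symmetric]] in \<open>fastforce simp: add.commute\<close>)
  moreover have "coman_limsup a b z \<le> L_aVbV a b z"
    unfolding L_aVbV_def by (rule Inf_greatest) (use coman_limsup_le_aVbV[OF \<open>a \<noteq> b\<close>] in blast)
  ultimately show ?thesis by simp
qed

end
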